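(* Let $V$ be a $(2n+1)$-dimensional complex vector space, $U\subset V$ a hyperplane, $V_\bullet$ a full flag in $V$, and $\omega$ a skew-symmetric bilinear form on $V$ whose restriction to $U$ is nondegenerate. Then there is a basis $\{e_1,\dots,e_{2n+1}\}$ of $V$ such that $e_1,\dots,e_{2n}\in U$, $e_{2n+1}$ spans $\ker(\omega)=\{v:\omega(v,\cdot)\equiv0\}$, the basis $\{e_1,\dots,e_{2n+1}\}$ is hyperbolic with respect to $\omega$, and each subspace $V_i$ of the flag is spanned by some vectors chosen among $e_1,\dots,e_{2n+1}$ and $e_1+e_{2n+1},\dots,e_{2n}+e_{2n+1}$ (i.e. there are vectors $v_1,\dots,v_{2n+1}$, each of the form $e_k$ or $e_k+e_{2n+1}$ with $k\le 2n$, or $e_{2n+1}$, with $V_i=\langle v_1,\dots,v_i\rangle$ for all $i$).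
   Context: A full flag $V_\bullet$ in $V$ is a chain of subspaces $0\subset V_1\subset\dots\subset V_{2n+1}=V$ with $\dim V_i=i$. A basis $\{e_1,\dots,e_N\}$ is hyperbolic with respect to a skew-symmetric form $\omega$ if for every $i$ either $\omega(e_i,\cdot)\equiv 0$, or there is exactly one index $j$ with $\omega(e_i,e_j)\neq 0$, and for that $j$ one has $\omega(e_i,e_j)=\pm1$. *)

theory Defs
  imports "HOL-Analysis.Analysis"
begin

text \<open>Vectors of V = complex^'m; complex scalar multiplication is (*s), and
  complex-linear notions are those of the interpretation vec (vec.span, vec.dim, ...).\<close>

definition skew_bilinear :: "(complex^'m \<Rightarrow> complex^'m \<Rightarrow> complex) \<Rightarrow> bool" where
  "skew_bilinear \<omega> \<longleftrightarrow>
     (\<forall>x y z. \<omega> (x + y) z = \<omega> x z + \<omega> y z) \<and>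
     (\<forall>c x z. \<omega> (c *s x) z = c * \<omega> x z) \<and>
     (\<forall>x y z. \<omega> z (x + y) = \<omega> z x + \<omega> z y) \<and>
     (\<forall>c x z. \<omega> z (c *s x) = c * \<omega> z x) \<and>
     (\<forall>x y. \<omega> x y = - \<omega> y x)"

definition full_flag :: "nat \<Rightarrow> (nat \<Rightarrow> (complex^'m) set) \<Rightarrow> bool" where
  "full_flag N F \<longleftrightarrow>
     (\<forall>i\<in>{1..N}. vec.subspace (F i) \<and> vec.dim (F i) = i) \<and>
     (\<forall>i. 1 \<le> i \<and> i < N \<longrightarrow> F i \<subseteq> F (Suc i)) \<and>
     F N = UNIV"

definition is_basis :: "nat \<Rightarrow> (nat \<Rightarrow> complex^'m) \<Rightarrow> bool" where
  "is_basis N e \<longleftrightarrow> inj_on e {1..N} \<and> vec.independent (e ` {1..N}) \<and>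
     vec.span (e ` {1..N}) = UNIV"

definition hyperbolic :: "(complex^'m \<Rightarrow> complex^'m \<Rightarrow> complex) \<Rightarrow> nat \<Rightarrow> (nat \<Rightarrow> complex^'m) \<Rightarrow> bool" where
  "hyperbolic \<omega> N e \<longleftrightarrow>
     (\<forall>i\<in>{1..N}. (\<forall>v. \<omega> (e i) v = 0) \<or>
        ((\<exists>!j. j \<in> {1..N} \<and> \<omega> (e i) (e j) \<noteq> 0) \<and>
         (\<forall>j\<in>{1..N}. \<omega> (e i) (e j) \<noteq> 0 \<longrightarrow> \<omega> (e i) (e j) = 1 \<or> \<omega> (e i) (e j) = -1)))"

end

theory Submission
  imports Defs
begin

(* Since dim V = 2n+1 is odd, the skew-symmetric Gram matrix of omega is singular,
   so omega has a nonzero kernel vector z0; nondegeneracy on U puts z0 outside U, so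
   V = <z0> + U and ker omega = <z0>.  The flag is the flag of initial segments of a list ws
   of vectors.  By induction on the length of ws we show, for any nondegenerate subspace U,
   kernel vector z and independent list ws with U \<subseteq> span ws \<subseteq> <z> + U, that some list vs of
   vectors kappa z, x, x + kappa z (x in a hyperbolic set E \<subseteq> U, kappa \<noteq> 0) defines the same
   flag as ws.  If the first vector f of ws lies in <z>, the other vectors are projected into U
   along z and the induction continues with kernel vector 0.  Otherwise f pairs nontrivially
   with a first later vector w_j; the induction continues in the omega-complement of <f, w_j>
   inside U with the symplectically projected remaining vectors, and a normalized hyperbolic
   pair is inserted at the positions of f and w_j. *)

lemma span_insert_triangular:
  assumes d: "x - c *s y \<in> vec.span S" and c: "(c::complex) \<noteq> 0"
  shows "vec.span (insert x S) = vec.span (insert y S)"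
proof -
  have S: "vec.span S \<subseteq> vec.span (insert x S)" "vec.span S \<subseteq> vec.span (insert y S)"
    by (simp_all add: vec.span_mono subset_insertI)
  have "(x - c *s y) + c *s y \<in> vec.span (insert y S)"
    using d S by (intro vec.span_add vec.span_scale) (auto intro: vec.span_base)
  then have x: "x \<in> vec.span (insert y S)" by simp
  have "x \<in> vec.span (insert x S)" "x - c *s y \<in> vec.span (insert x S)"
    using d S by (auto intro: vec.span_base)
  then have "x - (x - c *s y) \<in> vec.span (insert x S)" by (rule vec.span_diff)
  then have "(1/c) *s (x - (x - c *s y)) \<in> vec.span (insert x S)"
    by (rule vec.span_scale)
  then have y: "y \<in> vec.span (insert x S)" using c by (simp add: vector_smult_assoc)
  show ?thesis
    using x y by (auto simp: vec.span_eq intro: vec.span_base vec.span_superset[THEN subsetD])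
qed

lemma span_insert_subspace:
  assumes "vec.subspace U" "v \<in> vec.span (insert z U)"
  obtains c where "v - c *s z \<in> U"
proof -
  obtain c where "v - c *s z \<in> vec.span U" using assms(2) vec.span_breakdown_eq by blast
  then show ?thesis using that vec.span_eq_iff[THEN iffD2, OF assms(1)] by simp
qed

definition flag_equiv :: "(complex^'m) list \<Rightarrow> (complex^'m) list \<Rightarrow> bool" where
  "flag_equiv vs ws \<longleftrightarrow> length vs = length ws \<and>
     (\<forall>i\<le>length ws. vec.span (set (take i vs)) = vec.span (set (take i ws)))"

lemma flag_equiv_refl: "flag_equiv ws ws"
  by (simp add: flag_equiv_def)

lemma flag_equiv_trans: "flag_equiv us vs \<Longrightarrow> flag_equiv vs ws \<Longrightarrow> flag_equiv us ws"
  by (simp add: flag_equiv_def)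

lemma flag_equiv_span: "flag_equiv vs ws \<Longrightarrow> vec.span (set vs) = vec.span (set ws)"
  unfolding flag_equiv_def by (metis order_refl take_all)

lemma set_take_insert_at:
  assumes "k \<le> j" "j \<le> length xs"
  shows "set (take (Suc j) (take k xs @ x # drop k xs)) = insert x (set (take j xs))"
proof -
  obtain d where j: "j = k + d" using assms(1) le_Suc_ex by blast
  then show ?thesis using assms(2) by (auto simp: take_add min_def)
qed

lemma flag_equiv_insert:
  assumes eq: "flag_equiv vs ws" and k: "k \<le> length ws" and c: "c \<noteq> 0"
    and d: "x - c *s y \<in> vec.span (set (take k ws))"
  shows "flag_equiv (take k vs @ x # drop k vs) (take k ws @ y # drop k ws)"
proof -
  have len: "length vs = length ws" using eq by (simp add: flag_equiv_def)
  have "vec.span (set (take i (take k vs @ x # drop k vs))) =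
        vec.span (set (take i (take k ws @ y # drop k ws)))" if i: "i \<le> Suc (length ws)" for i
  proof (cases "i \<le> k")
    case True
    then show ?thesis using eq k len by (simp add: flag_equiv_def min_def)
  next
    case False
    then obtain j where j: "i = Suc j" "k \<le> j" "j \<le> length ws" using i by (cases i) auto
    have pre: "vec.span (set (take j vs)) = vec.span (set (take j ws))"
      using eq j(3) by (simp add: flag_equiv_def)
    have "x - c *s y \<in> vec.span (set (take j ws))"
      using d vec.span_mono[OF set_take_subset_set_take[OF j(2)]] by blast
    then have "vec.span (insert x (set (take j ws))) = vec.span (insert y (set (take j ws)))"
      using c by (rule span_insert_triangular)
    moreover have "vec.span (insert x (set (take j vs))) = vec.span (insert x (set (take j ws)))"
      using pre by (simp add: vec.span_insert)
    moreover have "set (take i (take k vs @ x # drop k vs)) = insert x (set (take j vs))"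
      "set (take i (take k ws @ y # drop k ws)) = insert y (set (take j ws))"
      unfolding j(1) using j len by (simp_all only: set_take_insert_at)
    ultimately show ?thesis by simp
  qed
  then show ?thesis using len by (simp add: flag_equiv_def)
qed

lemma flag_equiv_snoc:
  assumes eq: "flag_equiv vs ws" and "c \<noteq> 0" and "x - c *s y \<in> vec.span (set ws)"
  shows "flag_equiv (vs @ [x]) (ws @ [y])"
proof -
  have "length vs = length ws" using eq by (simp add: flag_equiv_def)
  then show ?thesis using flag_equiv_insert[OF eq order_refl assms(2)] assms(3) by simp
qed

lemma flag_equiv_Cons: "flag_equiv vs ws \<Longrightarrow> flag_equiv (x # vs) (x # ws)"
  using flag_equiv_insert[of vs ws 0 1 x x] by simp

lemma flag_equiv_append_map:
  assumes eq: "flag_equiv vs ws" and shift: "\<forall>x\<in>set xs. \<rho> x - x \<in> vec.span (set ws)"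
  shows "flag_equiv (vs @ map \<rho> xs) (ws @ xs)"
  using shift
proof (induction xs rule: rev_induct)
  case Nil
  then show ?case using eq by simp
next
  case (snoc x xs)
  then have IH: "flag_equiv (vs @ map \<rho> xs) (ws @ xs)" by simp
  have "\<rho> x - 1 *s x \<in> vec.span (set (ws @ xs))"
    using snoc.prems vec.span_mono[of "set ws" "set (ws @ xs)"] by auto
  from flag_equiv_snoc[OF IH _ this] show ?case by simp
qed

definition indep_list :: "(complex^'m) list \<Rightarrow> bool" where
  "indep_list ws \<longleftrightarrow> distinct ws \<and> vec.independent (set ws)"

lemma indep_list_iff_dim: "indep_list ws \<longleftrightarrow> vec.dim (set ws) = length ws"
proof
  assume "indep_list ws"
  then show "vec.dim (set ws) = length ws"
    by (simp add: indep_list_def vec.dim_eq_card_independent distinct_card)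
next
  assume dim: "vec.dim (set ws) = length ws"
  have "vec.dim (set ws) \<le> card (set ws)" by (rule vec.dim_le_card) (simp_all add: vec.span_superset)
  then have card: "card (set ws) = length ws" using dim card_length[of ws] by linarith
  then have "vec.independent (set ws)"
    by (intro vec.card_le_dim_spanning[of _ "set ws"]) (simp_all add: vec.span_superset dim)
  then show "indep_list ws" using card by (simp add: indep_list_def card_distinct)
qed

lemma flag_equiv_indep_list: "flag_equiv vs ws \<Longrightarrow> indep_list ws \<Longrightarrow> indep_list vs"
  unfolding indep_list_iff_dim by (metis flag_equiv_span vec.dim_span flag_equiv_def)

lemma image_nth_pred: "i \<le> length vs \<Longrightarrow> (\<lambda>k. vs ! (k - 1)) ` {1..i} = set (take i vs)"
proof -
  assume i: "i \<le> length vs"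
  have "(\<lambda>k. vs ! (k - 1)) ` {1..i} = (\<lambda>k. vs ! (k - 1)) ` (Suc ` {0..<i})"
    by (simp add: atLeastLessThanSuc_atLeastAtMost)
  also have "\<dots> = nth vs ` {0..<i}" unfolding image_image by simp
  also have "\<dots> = set (take i vs)" using i by (rule nth_image)
  finally show ?thesis .
qed

lemma span_insert_hyperplane:
  fixes U :: "(complex^'m) set"
  assumes U: "vec.subspace U" and dim: "vec.dim (UNIV :: (complex^'m) set) = Suc (vec.dim U)"
    and z: "z \<notin> U"
  shows "vec.span (insert z U) = UNIV"
proof -
  have "vec.dim (insert z U) = Suc (vec.dim U)"
    using z by (simp add: vec.dim_insert vec.span_eq_iff[THEN iffD2, OF U])
  then have "vec.span (insert z U) = vec.span UNIV" using dim by (intro vec.dim_eq_span) simp_all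
  then show ?thesis by simp
qed

lemma full_flag_list:
  assumes flag: "full_flag N F"
  obtains ws where "length ws = N" "\<forall>i\<in>{1..N}. F i = vec.span (set (take i ws))"
proof -
  have sub: "vec.subspace (F i)" "vec.dim (F i) = i" if "i \<in> {1..N}" for i
    using flag that by (auto simp: full_flag_def)
  have mono: "F i \<subseteq> F (Suc i)" if "1 \<le> i" "i < N" for i
    using flag that by (auto simp: full_flag_def)
  have "\<exists>ws. length ws = k \<and> (\<forall>i\<in>{1..k}. F i = vec.span (set (take i ws)))" if "k \<le> N" for k
    using that
  proof (induction k)
    case 0
    then show ?case by simp
  next
    case (Suc k)
    then obtain ws where ws: "length ws = k" "\<forall>i\<in>{1..k}. F i = vec.span (set (take i ws))"
      by auto
    have "vec.span (set ws) \<subseteq> F (Suc k) \<and> vec.dim (set ws) = k"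
    proof (cases "k = 0")
      case True
      then show ?thesis using ws(1) sub(1)[of 1] Suc.prems by (simp add: vec.subspace_0)
    next
      case False
      then have "vec.span (set ws) = F k" using ws(2)[rule_format, of k] ws(1) by simp
      then show ?thesis using False Suc.prems mono[of k] sub(2)[of k] vec.dim_span[of "set ws"]
        by simp
    qed
    then have S: "vec.span (set ws) \<subseteq> F (Suc k)" "vec.dim (set ws) = k" by auto
    have "\<not> F (Suc k) \<subseteq> vec.span (set ws)"
      using vec.dim_subset[of "F (Suc k)" "vec.span (set ws)"] S(2) sub(2)[of "Suc k"] Suc.prems
      by auto
    then obtain w where w: "w \<in> F (Suc k)" "w \<notin> vec.span (set ws)" by blast
    have "insert w (set ws) \<subseteq> F (Suc k)" using w(1) S(1) vec.span_superset by blast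
    moreover have "vec.dim (F (Suc k)) \<le> vec.dim (insert w (set ws))"
      using w(2) S(2) sub(2)[of "Suc k"] Suc.prems by (simp add: vec.dim_insert)
    ultimately have "vec.span (insert w (set ws)) = vec.span (F (Suc k))"
      by (rule vec.dim_eq_span)
    then have "vec.span (insert w (set ws)) = F (Suc k)"
      using sub(1)[of "Suc k"] Suc.prems by simp
    then show ?case using ws
      by (intro exI[of _ "ws @ [w]"]) (auto simp: le_Suc_eq)
  qed
  then show ?thesis using that by blast
qed

lemma det_skew_symmetric_odd:
  fixes A :: "complex^'n^'n"
  assumes skew: "transpose A = - A" and odd: "odd CARD('n)"
  shows "det A = 0"
proof -
  have neg: "- A = (\<chi> i. (-1) *s A $ i)" by (simp add: vec_eq_iff)
  have "det A = det (transpose A)" by simp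
  also have "\<dots> = (\<Prod>i\<in>(UNIV::'n set). -1) * det A"
    unfolding skew neg det_rows_mul by simp
  also have "\<dots> = - det A" using odd by simp
  finally show ?thesis by simp
qed

definition adapted :: "complex^'m \<Rightarrow> (complex^'m) set \<Rightarrow> (complex^'m) list \<Rightarrow> bool" where
  "adapted z E vs \<longleftrightarrow> (\<forall>v\<in>set vs. v = z \<or> (\<exists>x\<in>E. v = x \<or> v = x + z))"

locale skew_form =
  fixes \<omega> :: "complex^'m \<Rightarrow> complex^'m \<Rightarrow> complex"
  assumes skew_bilinear: "skew_bilinear \<omega>"
begin

lemma add_left [simp]: "\<omega> (x + y) z = \<omega> x z + \<omega> y z"
  and add_right [simp]: "\<omega> z (x + y) = \<omega> z x + \<omega> z y"
  and scale_left [simp]: "\<omega> (c *s x) z = c * \<omega> x z"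
  and scale_right [simp]: "\<omega> z (c *s x) = c * \<omega> z x"
  and antisym: "\<omega> x y = - \<omega> y x"
  using skew_bilinear unfolding skew_bilinear_def by blast+

lemma zero_left [simp]: "\<omega> 0 z = 0"
  using scale_left[of 0 0 z] by simp

lemma zero_right [simp]: "\<omega> z 0 = 0"
  using scale_right[of z 0 0] by simp

lemma diff_left [simp]: "\<omega> (x - y) z = \<omega> x z - \<omega> y z"
  using add_left[of "x - y" y z] by (simp add: algebra_simps)

lemma diff_right [simp]: "\<omega> z (x - y) = \<omega> z x - \<omega> z y"
  using add_right[of z "x - y" y] by (simp add: algebra_simps)

lemma self [simp]: "\<omega> x x = 0"
  using antisym[of x x] by simp

lemma orth_sym: "\<omega> x y = 0 \<longleftrightarrow> \<omega> y x = 0"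
  using antisym[of x y] by simp

text \<open>The set of vectors \<omega>-orthogonal to a fixed vector is a subspace, so orthogonality
  to a generating set propagates to its span.\<close>
lemma orth_span: assumes "\<forall>x\<in>A. \<omega> x y = 0" "v \<in> vec.span A" shows "\<omega> v y = 0"
proof -
  have "vec.span A \<subseteq> {v. \<omega> v y = 0}"
    by (rule vec.span_minimal) (use assms(1) in \<open>auto simp: vec.subspace_def\<close>)
  then show ?thesis using assms(2) by blast
qed

lemma sum_left: "finite S \<Longrightarrow> \<omega> (sum f S) y = (\<Sum>i\<in>S. \<omega> (f i) y)"
  by (induction S rule: finite_induct) simp_all

lemma sum_right: "finite S \<Longrightarrow> \<omega> y (sum f S) = (\<Sum>i\<in>S. \<omega> y (f i))"
  by (induction S rule: finite_induct) simp_all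

definition gram :: "complex^'m^'m" where
  "gram = (\<chi> i j. \<omega> (axis i 1) (axis j 1))"

lemma gram_mult: "(gram *v x) $ i = \<omega> (axis i 1) x"
proof -
  have "\<omega> (axis i 1) x = \<omega> (axis i 1) (\<Sum>j\<in>UNIV. x $ j *s axis j 1)"
    by (simp add: basis_expansion)
  also have "\<dots> = (\<Sum>j\<in>UNIV. gram $ i $ j * x $ j)"
    by (simp add: sum_right gram_def mult.commute)
  finally show ?thesis by (simp add: matrix_vector_mult_def)
qed

lemma transpose_gram: "transpose gram = - gram"
  by (simp add: vec_eq_iff transpose_def gram_def) (metis antisym)

lemma kernel_exists:
  assumes "odd CARD('m)"
  obtains z where "z \<noteq> 0" "\<forall>y. \<omega> z y = 0"
proof -
  have "det gram = 0" using det_skew_symmetric_odd[OF transpose_gram assms] .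
  then have "\<not> invertible gram" by (simp add: invertible_det_nz)
  then obtain x where x: "gram *v x = 0" "x \<noteq> 0"
    unfolding invertible_left_inverse matrix_left_invertible_ker by blast
  have "\<omega> v x = 0" for v
  proof -
    have "\<omega> v x = \<omega> (\<Sum>i\<in>UNIV. v $ i *s axis i 1) x" by (simp add: basis_expansion)
    also have "\<dots> = (\<Sum>i\<in>UNIV. v $ i * (gram *v x) $ i)" by (simp add: sum_left gram_mult)
    finally show ?thesis using x(1) by simp
  qed
  then show ?thesis using that x(2) orth_sym by blast
qed

definition nondegenerate :: "(complex^'m) set \<Rightarrow> bool" where
  "nondegenerate U \<longleftrightarrow> (\<forall>u\<in>U. (\<forall>w\<in>U. \<omega> u w = 0) \<longrightarrow> u = 0)"

definition hyperbolic_set :: "(complex^'m) set \<Rightarrow> bool" where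
  "hyperbolic_set E \<longleftrightarrow>
     (\<forall>x\<in>E. \<exists>y\<in>E. {y'\<in>E. \<omega> x y' \<noteq> 0} = {y} \<and> (\<omega> x y = 1 \<or> \<omega> x y = -1))"

lemma hyperbolic_set_empty: "hyperbolic_set {}"
  by (simp add: hyperbolic_set_def)

lemma hyperbolic_set_insert_pair:
  assumes E: "hyperbolic_set E" and e12: "\<omega> e1 e2 = 1"
    and orth: "\<forall>x\<in>E. \<omega> e1 x = 0 \<and> \<omega> e2 x = 0"
  shows "hyperbolic_set (insert e1 (insert e2 E))"
  unfolding hyperbolic_set_def
proof
  let ?E = "insert e1 (insert e2 E)"
  have e21: "\<omega> e2 e1 = -1" using antisym[of e2 e1] e12 by simp
  have orth': "\<forall>x\<in>E. \<omega> x e1 = 0 \<and> \<omega> x e2 = 0" using orth orth_sym by blast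
  fix x assume "x \<in> ?E"
  then consider "x = e1" | "x = e2" | "x \<in> E" by blast
  then show "\<exists>y\<in>?E. {y'\<in>?E. \<omega> x y' \<noteq> 0} = {y} \<and> (\<omega> x y = 1 \<or> \<omega> x y = -1)"
  proof cases
    case 1
    then have "{y'\<in>?E. \<omega> x y' \<noteq> 0} = {e2}" using e12 orth by auto
    then show ?thesis using 1 e12 by blast
  next
    case 2
    then have "{y'\<in>?E. \<omega> x y' \<noteq> 0} = {e1}" using e21 orth by auto
    then show ?thesis using 2 e21 by blast
  next
    case 3
    then have "{y'\<in>?E. \<omega> x y' \<noteq> 0} = {y'\<in>E. \<omega> x y' \<noteq> 0}" using orth' by auto
    then show ?thesis using 3 E unfolding hyperbolic_set_def by auto
  qed
qed

text \<open>A hyperbolic set is linearly independent: pairing with the partner of an element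
  detects that element in any linear combination.\<close>
lemma hyperbolic_set_independent:
  assumes E: "hyperbolic_set E"
  shows "vec.independent E"
  unfolding vec.dependent_def
proof clarify
  fix a assume a: "a \<in> E" "a \<in> vec.span (E - {a})"
  obtain p where p: "p \<in> E" "{y\<in>E. \<omega> a y \<noteq> 0} = {p}"
    using E a(1) unfolding hyperbolic_set_def by blast
  obtain q where q: "{y\<in>E. \<omega> p y \<noteq> 0} = {q}"
    using E p(1) unfolding hyperbolic_set_def by blast
  have "\<omega> p a \<noteq> 0" using p antisym[of p a] by auto
  then have "q = a" using q a(1) by auto
  then have "\<forall>t\<in>E - {a}. \<omega> t p = 0" using q orth_sym by blast
  then have "\<omega> a p = 0" using a(2) by (rule orth_span)
  then show False using p by auto
qed

lemma kernel_line:
  assumes U: "vec.subspace U" and nd: "nondegenerate U" and z: "\<forall>y. \<omega> z y = 0"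
    and V: "vec.span (insert z U) = UNIV"
  shows "{v. \<forall>w. \<omega> v w = 0} = vec.span {z}"
proof
  show "vec.span {z} \<subseteq> {v. \<forall>w. \<omega> v w = 0}" using z by (auto simp: vec.span_singleton)
  show "{v. \<forall>w. \<omega> v w = 0} \<subseteq> vec.span {z}"
  proof
    fix v assume v: "v \<in> {v. \<forall>w. \<omega> v w = 0}"
    obtain c where c: "v - c *s z \<in> U" using span_insert_subspace[OF U] V by blast
    moreover have "\<forall>w\<in>U. \<omega> (v - c *s z) w = 0" using v z by simp
    ultimately have "v = c *s z" using nd unfolding nondegenerate_def by auto
    then show "v \<in> vec.span {z}" by (simp add: vec.span_base vec.span_scale)
  qed
qed

lemma hyperbolic_enumeration:
  assumes inj: "inj_on e {1..N}" and img: "e ` {1..N} = insert z E"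
    and z: "\<forall>y. \<omega> z y = 0" and E: "hyperbolic_set E"
  shows "hyperbolic \<omega> N e"
  unfolding hyperbolic_def
proof
  fix i assume i: "i \<in> {1..N}"
  have zr: "\<omega> x z = 0" for x using z orth_sym by blast
  show "(\<forall>v. \<omega> (e i) v = 0) \<or> ((\<exists>!j. j \<in> {1..N} \<and> \<omega> (e i) (e j) \<noteq> 0) \<and>
    (\<forall>j\<in>{1..N}. \<omega> (e i) (e j) \<noteq> 0 \<longrightarrow> \<omega> (e i) (e j) = 1 \<or> \<omega> (e i) (e j) = -1))"
  proof (cases "e i = z")
    case True
    then show ?thesis using z by simp
  next
    case False
    then have "e i \<in> E" using i img by blast
    then obtain y where y: "y \<in> E" "{y'\<in>E. \<omega> (e i) y' \<noteq> 0} = {y}" "\<omega> (e i) y = 1 \<or> \<omega> (e i) y = -1"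
      using E unfolding hyperbolic_set_def by blast
    obtain j where j: "j \<in> {1..N}" "e j = y" using y(1) img by (metis imageE insertI2)
    have partner: "e j' = y" if "j' \<in> {1..N}" "\<omega> (e i) (e j') \<noteq> 0" for j'
    proof -
      have "e j' \<in> E" using that img zr by (metis image_eqI insertE)
      then show ?thesis using that(2) y(2) by blast
    qed
    have "\<exists>!j. j \<in> {1..N} \<and> \<omega> (e i) (e j) \<noteq> 0"
    proof (rule ex1I[of _ j])
      show "j \<in> {1..N} \<and> \<omega> (e i) (e j) \<noteq> 0" using j y(2) by auto
      show "j' = j" if "j' \<in> {1..N} \<and> \<omega> (e i) (e j') \<noteq> 0" for j'
        using that partner j inj by (metis inj_onD)
    qed
    then show ?thesis using partner y(3) by auto
  qed
qed

lemma enumerated_basis: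
  assumes dim: "vec.dim (UNIV :: (complex^'m) set) = Suc m"
    and z: "z \<notin> vec.span E" "\<forall>y. \<omega> z y = 0" and E: "hyperbolic_set E"
    and vs: "adapted z E vs" "vec.span (set vs) = UNIV"
  obtains e where "is_basis (Suc m) e" "e ` {1..m} = E" "e (Suc m) = z" "hyperbolic \<omega> (Suc m) e"
proof -
  let ?T = "insert z E"
  have indT: "vec.independent ?T"
    using z(1) hyperbolic_set_independent[OF E] by (rule vec.independent_insertI)
  have "set vs \<subseteq> vec.span ?T"
    using vs(1) by (auto simp: adapted_def intro: vec.span_base vec.span_add)
  then have spanT: "vec.span ?T = UNIV" using vs(2) vec.span_minimal[of "set vs" "vec.span ?T"] by auto
  have zE: "z \<notin> E" using z(1) vec.span_base by blast
  have "card ?T = Suc m" using vec.dim_span_eq_card_independent[OF indT] spanT dim by simp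
  then have cardE: "card E = m" and finE: "finite E"
    using zE vec.finiteI_independent[OF indT] by auto
  obtain h where h: "bij_betw h {1..m} E" using ex_bij_betw_nat_finite_1[OF finE] cardE by auto
  define e where "e k = (if k = Suc m then z else h k)" for k
  have eh: "e k = h k" if "k \<in> {1..m}" for k using that by (simp add: e_def)
  have ez: "e (Suc m) = z" by (simp add: e_def)
  have seg: "{1..Suc m} = insert (Suc m) {1..m}" by auto
  have "e ` {1..m} = h ` {1..m}" by (rule image_cong[OF refl eh])
  then have eE: "e ` {1..m} = E" using h by (simp add: bij_betw_def)
  have "inj_on e {1..m} = inj_on h {1..m}" by (rule inj_on_cong[OF eh])
  then have "inj_on e {1..m}" using h by (simp add: bij_betw_def)
  then have inj: "inj_on e {1..Suc m}" unfolding seg inj_on_insert using eE ez zE by auto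
  have img: "e ` {1..Suc m} = ?T" unfolding seg image_insert eE ez ..
  have "is_basis (Suc m) e" using inj img indT spanT by (simp add: is_basis_def)
  moreover have "hyperbolic \<omega> (Suc m) e" using inj img z(2) E by (rule hyperbolic_enumeration)
  ultimately show ?thesis using that eE by (simp add: e_def)
qed

text \<open>Symplectic projection along a hyperbolic pair \<open>(f, g)\<close> (\<open>\<omega> f g = 1\<close>) onto the
  \<omega>-complement of \<open>\<langle>f, g\<rangle>\<close>, and the \<omega>-complement \<open>scompl U f g\<close> of the pair inside \<open>U\<close>.\<close>
definition sproj :: "complex^'m \<Rightarrow> complex^'m \<Rightarrow> complex^'m \<Rightarrow> complex^'m" where
  "sproj f g y = y - \<omega> y g *s f + \<omega> y f *s g"

definition scompl :: "(complex^'m) set \<Rightarrow> complex^'m \<Rightarrow> complex^'m \<Rightarrow> (complex^'m) set" where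
  "scompl U f g = {x\<in>U. \<omega> x f = 0 \<and> \<omega> x g = 0}"

lemma sproj_orth:
  assumes "\<omega> f g = 1"
  shows "\<omega> (sproj f g y) f = 0" "\<omega> (sproj f g y) g = 0"
  using assms antisym[of g f] by (simp_all add: sproj_def)

lemma sproj_shift: "sproj f g y - y \<in> vec.span {f, g}"
proof -
  have "sproj f g y - y = \<omega> y f *s g - \<omega> y g *s f" by (simp add: sproj_def)
  then show ?thesis by (metis vec.span_diff vec.span_scale vec.span_base insertI1 insertI2)
qed

lemma sproj_shift_orth: "\<omega> y f = 0 \<Longrightarrow> sproj f g y - y \<in> vec.span {f}"
proof -
  assume "\<omega> y f = 0"
  then have "sproj f g y - y = (- \<omega> y g) *s f" by (simp add: sproj_def)
  then show ?thesis by (metis vec.span_scale vec.span_base singletonI)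
qed

lemma scompl_subspace: "vec.subspace U \<Longrightarrow> vec.subspace (scompl U f g)"
  by (auto simp: vec.subspace_def scompl_def)

text \<open>The \<omega>-complement of a hyperbolic pair in a nondegenerate subspace is again
  nondegenerate; the pair may be perturbed by kernel vectors, which \<omega> does not see.\<close>
lemma scompl_nondegenerate:
  assumes U: "vec.subspace U" and nd: "nondegenerate U" and z: "\<forall>y. \<omega> z y = 0"
    and uf: "f - cf *s z \<in> U" and ug: "g - cg *s z \<in> U" and fg: "\<omega> f g = 1"
  shows "nondegenerate (scompl U f g)"
  unfolding nondegenerate_def
proof (intro ballI impI)
  fix u assume u: "u \<in> scompl U f g" and h: "\<forall>w\<in>scompl U f g. \<omega> u w = 0"
  have zr: "\<omega> y z = 0" for y using z orth_sym by blast
  let ?f = "f - cf *s z" and ?g = "g - cg *s z"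
  have fg': "\<omega> ?f ?g = 1" using fg z zr by simp
  have "\<omega> u w = 0" if w: "w \<in> U" for w
  proof -
    let ?r = "sproj ?f ?g w"
    have "?r \<in> U" unfolding sproj_def
      by (rule vec.subspace_add[OF U vec.subspace_diff[OF U w vec.subspace_scale[OF U uf]]
            vec.subspace_scale[OF U ug]])
    moreover have "\<omega> ?r f = 0" "\<omega> ?r g = 0" using sproj_orth[OF fg', of w] zr by simp_all
    ultimately have "\<omega> u ?r = 0" using h by (simp add: scompl_def)
    moreover have "\<omega> u ?f = 0" "\<omega> u ?g = 0" using u zr by (simp_all add: scompl_def)
    ultimately show ?thesis using zr by (simp add: sproj_def)
  qed
  then show "u = 0" using nd u unfolding nondegenerate_def scompl_def by blast
qed

lemma sproj_span_scompl:
  assumes U: "vec.subspace U" and z: "\<forall>y. \<omega> z y = 0" and fg: "\<omega> f g = 1"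
    and f: "f \<in> vec.span (insert z U)" and g: "g \<in> vec.span (insert z U)"
    and y: "y \<in> vec.span (insert z U)"
  shows "sproj f g y \<in> vec.span (insert z (scompl U f g))"
proof -
  have "sproj f g y \<in> vec.span (insert z U)" unfolding sproj_def
    by (rule vec.span_add[OF vec.span_diff[OF y vec.span_scale[OF f]] vec.span_scale[OF g]])
  then obtain c where "sproj f g y - c *s z \<in> U" using span_insert_subspace[OF U] by blast
  then have "sproj f g y - c *s z \<in> scompl U f g" using sproj_orth[OF fg] z by (simp add: scompl_def)
  then show ?thesis by (auto simp: vec.span_breakdown_eq intro: vec.span_base)
qed

lemma span_hyperbolic_pair_cancel:
  assumes fg: "\<omega> f g = 1" and S: "\<forall>x\<in>S. \<omega> x f = 0 \<and> \<omega> x g = 0"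
    and u: "u \<in> vec.span (insert f (insert g S))" "\<omega> u f = 0" "\<omega> u g = 0"
  shows "u \<in> vec.span S"
proof -
  obtain \<alpha> \<beta> where s: "u - \<alpha> *s f - \<beta> *s g \<in> vec.span S"
    using u(1) by (auto simp: vec.span_breakdown_eq algebra_simps)
  define s where "s = u - \<alpha> *s f - \<beta> *s g"
  have "\<omega> s f = 0" "\<omega> s g = 0" using S s orth_span unfolding s_def by blast+
  moreover have "\<omega> g f = -1" using fg antisym[of g f] by simp
  ultimately have "\<beta> = 0" "\<alpha> = 0" using u(2,3) fg unfolding s_def by simp_all
  then show ?thesis using s by simp
qed

lemma normalize_pair:
  assumes U: "vec.subspace U" and z: "\<forall>y. \<omega> z y = 0" and \<kappa>: "\<kappa> \<noteq> 0"
    and uf: "f - cf *s z \<in> U" and ug: "g - cg *s z \<in> U" and fg: "\<omega> f g = 1"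
  shows "\<exists>e1 e2 l m n. e1 \<in> U \<and> e2 \<in> U \<and> \<omega> e1 e2 = 1 \<and> l \<noteq> 0 \<and> m \<noteq> 0 \<and>
     (l *s f = e1 \<or> l *s f = e1 + \<kappa> *s z) \<and>
     (m *s g + n *s f = e2 \<or> m *s g + n *s f = e2 + \<kappa> *s z)"
proof -
  define u1 where "u1 = f - cf *s z"
  define u2 where "u2 = g - cg *s z"
  have f: "f = u1 + cf *s z" and g: "g = u2 + cg *s z" by (simp_all add: u1_def u2_def)
  have zr: "\<omega> y z = 0" for y using z orth_sym by blast
  have u12: "\<omega> u1 u2 = 1" using fg z zr by (simp add: u1_def u2_def)
  have inU: "u1 \<in> U" "u2 \<in> U" using uf ug by (simp_all add: u1_def u2_def)
  consider "cf \<noteq> 0" | "cf = 0" "cg \<noteq> 0" | "cf = 0" "cg = 0" by blast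
  then show ?thesis
  proof cases
    case 1
    let ?e1 = "(\<kappa>/cf) *s u1" and ?e2 = "(cf/\<kappa>) *s (u2 - (cg/cf) *s u1)"
    have "?e1 \<in> U" "?e2 \<in> U" using U inU by (meson vec.subspace_scale vec.subspace_diff)+
    moreover have "\<omega> ?e1 ?e2 = 1" using u12 1 \<kappa> by simp
    moreover have "(\<kappa>/cf) *s f = ?e1 + \<kappa> *s z" using 1 by (simp add: f vec_eq_iff field_simps)
    moreover have "(cf/\<kappa>) *s g + (- cg/\<kappa>) *s f = ?e2"
      using 1 \<kappa> by (simp add: f g vec_eq_iff field_simps)
    ultimately show ?thesis using 1 \<kappa> by (metis divide_eq_0_iff)
  next
    case 2
    let ?e1 = "(cg/\<kappa>) *s u1" and ?e2 = "(\<kappa>/cg) *s u2"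
    have "?e1 \<in> U" "?e2 \<in> U" using U inU by (simp_all add: vec.subspace_scale)
    moreover have "\<omega> ?e1 ?e2 = 1" using u12 2 \<kappa> by simp
    moreover have "(cg/\<kappa>) *s f = ?e1" using 2 by (simp add: f)
    moreover have "(\<kappa>/cg) *s g + 0 *s f = ?e2 + \<kappa> *s z"
      using 2 \<kappa> by (simp add: g vec_eq_iff field_simps)
    ultimately show ?thesis using 2 \<kappa> by (metis divide_eq_0_iff)
  next
    case 3
    then have "1 *s f = u1" "1 *s g + 0 *s f = u2" by (simp_all add: f g)
    then show ?thesis using inU u12 by (metis one_neq_zero)
  qed
qed

end

context skew_form
begin

definition admissible :: "(complex^'m) set \<Rightarrow> complex^'m \<Rightarrow> (complex^'m) list \<Rightarrow> bool" where
  "admissible U z ws \<longleftrightarrow> vec.subspace U \<and> nondegenerate U \<and> (\<forall>y. \<omega> z y = 0) \<and>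
     set ws \<subseteq> vec.span (insert z U) \<and> U \<subseteq> vec.span (set ws) \<and> indep_list ws"

definition flag_adapted :: "(complex^'m) set \<Rightarrow> complex^'m \<Rightarrow> (complex^'m) list \<Rightarrow> bool" where
  "flag_adapted U z ws \<longleftrightarrow> (\<exists>E vs \<kappa>. \<kappa> \<noteq> 0 \<and> E \<subseteq> U \<and> hyperbolic_set E \<and>
     adapted (\<kappa> *s z) E vs \<and> flag_equiv vs ws)"

lemma flag_adapted_Nil: "flag_adapted U z []"
  unfolding flag_adapted_def
  by (intro exI[of _ "{}"] exI[of _ "[]"] exI[of _ 1]) (simp add: hyperbolic_set_empty adapted_def flag_equiv_refl)

lemma span_drop_kernel_vector:
  assumes U: "vec.subspace U" and nd: "nondegenerate U" and z: "\<forall>y. \<omega> z y = 0"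
    and S: "S \<subseteq> U" and u: "u \<in> U" "u \<in> vec.span (insert z S)"
  shows "u \<in> vec.span S"
proof -
  obtain a where a: "u - a *s z \<in> vec.span S" using u(2) by (auto simp: vec.span_breakdown_eq)
  have "vec.span S \<subseteq> U" using S U by (simp add: vec.span_minimal)
  then have "u - (u - a *s z) \<in> U" using a u U by (blast intro: vec.subspace_diff)
  then have az: "a *s z \<in> U" by simp
  have "\<forall>y\<in>U. \<omega> (a *s z) y = 0" using z by simp
  then have "a *s z = 0" using nd az unfolding nondegenerate_def by blast
  then show ?thesis using a by (metis diff_zero)
qed

lemma kernel_reduction:
  assumes adm: "admissible U z (w1 # rest)" and w1: "w1 \<in> vec.span {z}"
  obtains ws' where "length ws' = length rest" "admissible U 0 ws'"
    "flag_equiv (w1 # ws') (w1 # rest)"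
proof -
  have U: "vec.subspace U" and nd: "nondegenerate U" and z: "\<forall>y. \<omega> z y = 0"
    and rest: "set rest \<subseteq> vec.span (insert z U)" and Uws: "U \<subseteq> vec.span (insert w1 (set rest))"
    and ind: "indep_list (w1 # rest)"
    using adm by (auto simp: admissible_def)
  obtain t where t: "w1 = t *s z" using w1 by (auto simp: vec.span_singleton)
  have "w1 \<noteq> 0" using ind vec.dependent_zero by (auto simp: indep_list_def)
  then have line: "vec.span {z} = vec.span {w1}"
    using span_insert_triangular[of w1 t z "{}"] t by simp
  have "\<forall>y\<in>set rest. \<exists>u. u \<in> U \<and> u - y \<in> vec.span {z}"
  proof
    fix y assume "y \<in> set rest"
    then obtain c where "y - c *s z \<in> U" using span_insert_subspace[OF U] rest by blast
    moreover have "(y - c *s z) - y \<in> vec.span {z}" by (simp add: vec.span_base vec.span_neg vec.span_scale)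
    ultimately show "\<exists>u. u \<in> U \<and> u - y \<in> vec.span {z}" by blast
  qed
  then obtain \<pi> where \<pi>: "\<And>y. y \<in> set rest \<Longrightarrow> \<pi> y \<in> U \<and> \<pi> y - y \<in> vec.span {z}" by metis
  define ws' where "ws' = map \<pi> rest"
  have eq: "flag_equiv (w1 # ws') (w1 # rest)"
    using flag_equiv_append_map[OF flag_equiv_refl, of rest \<pi> "[w1]"] \<pi> line by (simp add: ws'_def)
  then have "indep_list (w1 # ws')" using ind by (rule flag_equiv_indep_list)
  then have "indep_list ws'"
    using vec.independent_mono[of "insert w1 (set ws')" "set ws'"] by (auto simp: indep_list_def)
  moreover have ws'U: "set ws' \<subseteq> U" using \<pi> by (auto simp: ws'_def)
  moreover have "U \<subseteq> vec.span (set ws')"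
  proof
    fix u assume u: "u \<in> U"
    have "\<forall>y. \<omega> w1 y = 0" using z t by simp
    moreover have "u \<in> vec.span (insert w1 (set ws'))" using u Uws flag_equiv_span[OF eq] by auto
    ultimately show "u \<in> vec.span (set ws')" by (rule span_drop_kernel_vector[OF U nd _ ws'U u])
  qed
  moreover have "set ws' \<subseteq> vec.span (insert 0 U)" using ws'U vec.span_superset by blast
  ultimately have "admissible U 0 ws'" using U nd by (simp add: admissible_def)
  moreover have "length ws' = length rest" by (simp add: ws'_def)
  ultimately show ?thesis using that eq by blast
qed

text \<open>Reduction step when the first flag vector spans the kernel line: the solution of the
  reduced problem has no kernel vectors, and preceded by the first vector it solves the
  original problem.\<close>
lemma flag_adapted_kernel_first:
  assumes adm: "admissible U z (w1 # rest)" and w1: "w1 \<in> vec.span {z}"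
    and IH: "\<And>ws'. length ws' = length rest \<Longrightarrow> admissible U 0 ws' \<Longrightarrow> flag_adapted U 0 ws'"
  shows "flag_adapted U z (w1 # rest)"
proof -
  obtain ws' where len: "length ws' = length rest" and adm': "admissible U 0 ws'"
    and eq: "flag_equiv (w1 # ws') (w1 # rest)"
    using kernel_reduction[OF adm w1] .
  obtain E vs' \<kappa>' where E: "E \<subseteq> U" "hyperbolic_set E"
    and ad': "adapted (\<kappa>' *s 0) E vs'" and eq': "flag_equiv vs' ws'"
    using IH[OF len adm'] by (auto simp: flag_adapted_def)
  have "0 \<notin> set vs'"
    using flag_equiv_indep_list[OF eq'] adm' vec.dependent_zero by (auto simp: admissible_def indep_list_def)
  moreover obtain t where t: "w1 = t *s z" using w1 by (auto simp: vec.span_singleton)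
  ultimately have "adapted (t *s z) E (w1 # vs')" using ad' by (auto simp: adapted_def)
  moreover have "t \<noteq> 0"
  proof -
    have "indep_list (w1 # rest)" using adm by (simp add: admissible_def)
    then have "w1 \<noteq> 0" using vec.dependent_zero by (auto simp: indep_list_def)
    then show ?thesis using t by auto
  qed
  moreover have "flag_equiv (w1 # vs') (w1 # rest)" using flag_equiv_trans[OF flag_equiv_Cons[OF eq'] eq] .
  ultimately show ?thesis using E unfolding flag_adapted_def by blast
qed

text \<open>If the first flag vector is not a kernel vector, it pairs nontrivially with some later
  flag vector (by nondegeneracy of \<open>U\<close>); we split the list at the first such partner.\<close>
lemma first_partner:
  assumes adm: "admissible U z (w1 # rest)" and w1: "w1 \<notin> vec.span {z}"
  shows "\<exists>xs wj ys. rest = xs @ wj # ys \<and> \<omega> w1 wj \<noteq> 0 \<and> (\<forall>x\<in>set xs. \<omega> w1 x = 0)"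
proof -
  have U: "vec.subspace U" and nd: "nondegenerate U" and z: "\<forall>y. \<omega> z y = 0"
    and Uws: "U \<subseteq> vec.span (set (w1 # rest))"
    using adm by (auto simp: admissible_def)
  obtain c where u: "w1 - c *s z \<in> U"
    using span_insert_subspace[OF U] adm by (auto simp: admissible_def)
  have "w1 - c *s z \<noteq> 0" using w1 by (auto simp: vec.span_singleton)
  then obtain y where y: "y \<in> U" "\<omega> (w1 - c *s z) y \<noteq> 0"
    using nd u unfolding nondegenerate_def by blast
  then have "\<omega> w1 y \<noteq> 0" using z by simp
  have "\<exists>w\<in>set rest. \<omega> w1 w \<noteq> 0"
  proof (rule ccontr)
    assume "\<not> ?thesis"
    then have "\<forall>w\<in>set (w1 # rest). \<omega> w w1 = 0" using orth_sym by auto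
    then have "\<omega> y w1 = 0" using y(1) Uws by (blast intro: orth_span)
    then show False using \<open>\<omega> w1 y \<noteq> 0\<close> orth_sym by blast
  qed
  then show ?thesis using split_list_first_prop[of rest "\<lambda>w. \<omega> w1 w \<noteq> 0"] by blast
qed

lemma pair_reduction_flag_equiv:
  assumes "g = c *s wj" "c \<noteq> 0" and xs: "\<forall>x\<in>set xs. \<omega> x f = 0"
  shows "flag_equiv (f # map (sproj f g) xs @ g # map (sproj f g) ys) (f # xs @ wj # ys)"
proof -
  let ?\<rho> = "sproj f g"
  have "flag_equiv ([f] @ map ?\<rho> xs) ([f] @ xs)"
    using xs sproj_shift_orth by (intro flag_equiv_append_map[OF flag_equiv_refl]) simp
  then have "flag_equiv ((f # map ?\<rho> xs) @ [g]) ((f # xs) @ [wj])"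
    using assms(1,2) by (intro flag_equiv_snoc[where c = c]) (simp_all add: vec.span_zero)
  moreover have "vec.span {f, g} \<subseteq> vec.span (set ((f # xs) @ [wj]))"
  proof (rule vec.span_minimal)
    have "wj \<in> vec.span (set ((f # xs) @ [wj]))" by (simp add: vec.span_base)
    then show "{f, g} \<subseteq> vec.span (set ((f # xs) @ [wj]))"
      using assms(1) by (simp add: vec.span_base vec.span_scale)
  qed simp
  ultimately have "flag_equiv (((f # map ?\<rho> xs) @ [g]) @ map ?\<rho> ys) (((f # xs) @ [wj]) @ ys)"
    using sproj_shift by (intro flag_equiv_append_map) blast+
  then show ?thesis by simp
qed

lemma pair_reduction_admissible:
  assumes adm: "admissible U z (f # xs @ wj # ys)" and fg: "\<omega> f g = 1"
    and g: "g = c *s wj" "c \<noteq> 0" and xs: "\<forall>x\<in>set xs. \<omega> x f = 0"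
  shows "admissible (scompl U f g) z (map (sproj f g) (xs @ ys))"
proof -
  let ?\<rho> = "sproj f g" and ?U' = "scompl U f g" and ?ws' = "map (sproj f g) (xs @ ys)"
  have U: "vec.subspace U" and nd: "nondegenerate U" and z: "\<forall>y. \<omega> z y = 0"
    and sws: "set (f # xs @ wj # ys) \<subseteq> vec.span (insert z U)"
    and Uws: "U \<subseteq> vec.span (set (f # xs @ wj # ys))" and ind: "indep_list (f # xs @ wj # ys)"
    using adm by (auto simp: admissible_def)
  have eq: "flag_equiv (f # map ?\<rho> xs @ g # map ?\<rho> ys) (f # xs @ wj # ys)"
    using g xs by (rule pair_reduction_flag_equiv)
  have f_span: "f \<in> vec.span (insert z U)" and g_span: "g \<in> vec.span (insert z U)"
    using sws g by (auto intro: vec.span_scale)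
  obtain cf where "f - cf *s z \<in> U" using span_insert_subspace[OF U f_span] .
  moreover obtain cg where "g - cg *s z \<in> U" using span_insert_subspace[OF U g_span] .
  ultimately have "nondegenerate ?U'" using U nd z fg by (intro scompl_nondegenerate)
  moreover have "set ?ws' \<subseteq> vec.span (insert z ?U')"
    using sws sproj_span_scompl[OF U z fg f_span g_span] by auto
  moreover have "?U' \<subseteq> vec.span (set ?ws')"
  proof
    fix u assume u: "u \<in> ?U'"
    then have "u \<in> vec.span (set (f # map ?\<rho> xs @ g # map ?\<rho> ys))"
      using Uws flag_equiv_span[OF eq] by (auto simp: scompl_def)
    then have "u \<in> vec.span (insert f (insert g (set ?ws')))" by (simp add: insert_commute)
    moreover have "\<forall>x\<in>set ?ws'. \<omega> x f = 0 \<and> \<omega> x g = 0" using sproj_orth[OF fg] by auto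
    moreover have "\<omega> u f = 0" "\<omega> u g = 0" using u by (simp_all add: scompl_def)
    ultimately show "u \<in> vec.span (set ?ws')" using span_hyperbolic_pair_cancel[OF fg] by blast
  qed
  moreover have "indep_list ?ws'"
  proof -
    have "indep_list (f # map ?\<rho> xs @ g # map ?\<rho> ys)" using eq ind by (rule flag_equiv_indep_list)
    then show ?thesis
      using vec.independent_mono[of "set (f # map ?\<rho> xs @ g # map ?\<rho> ys)" "set ?ws'"]
      by (auto simp: indep_list_def)
  qed
  ultimately show ?thesis using U z by (simp add: admissible_def scompl_subspace)
qed

lemma flag_adapted_flag_equiv: "flag_adapted U z vs \<Longrightarrow> flag_equiv vs ws \<Longrightarrow> flag_adapted U z ws"
  unfolding flag_adapted_def by (metis flag_equiv_trans)

lemma flag_adapted_insert_pair: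
  assumes U: "vec.subspace U" and z: "\<forall>y. \<omega> z y = 0" and fg: "\<omega> f g = 1"
    and f_span: "f \<in> vec.span (insert z U)" and g_span: "g \<in> vec.span (insert z U)"
    and sol: "flag_adapted (scompl U f g) z ws'" and k: "k \<le> length ws'"
  shows "flag_adapted U z (f # take k ws' @ g # drop k ws')"
proof -
  obtain E' vs' \<kappa> where \<kappa>: "\<kappa> \<noteq> 0" and E': "E' \<subseteq> scompl U f g" "hyperbolic_set E'"
    and ad': "adapted (\<kappa> *s z) E' vs'" and eq': "flag_equiv vs' ws'"
    using sol unfolding flag_adapted_def by blast
  obtain cf where "f - cf *s z \<in> U" using span_insert_subspace[OF U f_span] .
  moreover obtain cg where "g - cg *s z \<in> U" using span_insert_subspace[OF U g_span] .
  ultimately obtain e1 e2 l m n where e: "e1 \<in> U" "e2 \<in> U" "\<omega> e1 e2 = 1" and lm: "l \<noteq> 0" "m \<noteq> 0"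
    and v1: "l *s f = e1 \<or> l *s f = e1 + \<kappa> *s z"
    and v2: "m *s g + n *s f = e2 \<or> m *s g + n *s f = e2 + \<kappa> *s z"
    using normalize_pair[OF U z \<kappa> _ _ fg] by blast
  have "\<omega> e1 x = 0 \<and> \<omega> e2 x = 0" if "x \<in> E'" for x
  proof -
    have "\<omega> f x = 0" "\<omega> g x = 0" using that E'(1) orth_sym by (auto simp: scompl_def)
    moreover have "\<omega> (e + \<kappa> *s z) x = \<omega> e x" for e using z by simp
    then have "\<omega> e1 x = \<omega> (l *s f) x" "\<omega> e2 x = \<omega> (m *s g + n *s f) x"
      using v1 v2 by metis+
    ultimately show ?thesis by simp
  qed
  then have E: "hyperbolic_set (insert e1 (insert e2 E'))"
    using E'(2) e(3) by (intro hyperbolic_set_insert_pair) auto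
  define vs where "vs = l *s f # take k vs' @ (m *s g + n *s f) # drop k vs'"
  have "flag_equiv (l *s f # vs') (f # ws')"
    using flag_equiv_insert[OF eq' _ lm(1), of 0 "l *s f" f] by (simp add: vec.span_zero)
  moreover have "Suc k \<le> length (f # ws')" using k by simp
  moreover have "(m *s g + n *s f) - m *s g \<in> vec.span (set (take (Suc k) (f # ws')))"
    by (simp add: vec.span_base vec.span_scale)
  ultimately have "flag_equiv vs (f # take k ws' @ g # drop k ws')"
    using flag_equiv_insert[where c = m] lm(2) unfolding vs_def by fastforce
  moreover have "adapted (\<kappa> *s z) (insert e1 (insert e2 E')) vs"
    using ad' v1 v2 by (auto simp: adapted_def vs_def dest: in_set_takeD in_set_dropD)
  moreover have "insert e1 (insert e2 E') \<subseteq> U" using e E'(1) by (auto simp: scompl_def)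
  ultimately show ?thesis using \<kappa> E unfolding flag_adapted_def by blast
qed

lemma flag_adapted_pair:
  assumes adm: "admissible U z (f # xs @ wj # ys)" and a: "\<omega> f wj \<noteq> 0"
    and xs: "\<forall>x\<in>set xs. \<omega> f x = 0"
    and IH: "\<And>U' ws'. length ws' = length xs + length ys \<Longrightarrow> admissible U' z ws' \<Longrightarrow>
      flag_adapted U' z ws'"
  shows "flag_adapted U z (f # xs @ wj # ys)"
proof -
  define g where "g = (1 / \<omega> f wj) *s wj"
  define ws' where "ws' = map (sproj f g) (xs @ ys)"
  have U: "vec.subspace U" and z: "\<forall>y. \<omega> z y = 0"
    and sws: "set (f # xs @ wj # ys) \<subseteq> vec.span (insert z U)"
    using adm by (auto simp: admissible_def)
  have fg: "\<omega> f g = 1" using a by (simp add: g_def)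
  have g: "g = (1 / \<omega> f wj) *s wj" "1 / \<omega> f wj \<noteq> 0" using a by (simp_all add: g_def)
  have xs': "\<forall>x\<in>set xs. \<omega> x f = 0" using xs orth_sym by blast
  have "admissible (scompl U f g) z ws'"
    unfolding ws'_def using adm fg g xs' by (rule pair_reduction_admissible)
  then have sol: "flag_adapted (scompl U f g) z ws'" by (rule IH[rotated]) (simp add: ws'_def)
  have f_span: "f \<in> vec.span (insert z U)" and g_span: "g \<in> vec.span (insert z U)"
    using sws g by (auto intro: vec.span_scale)
  have "flag_adapted U z (f # take (length xs) ws' @ g # drop (length xs) ws')"
    using flag_adapted_insert_pair[OF U z fg f_span g_span sol, of "length xs"] by (simp add: ws'_def)
  then have "flag_adapted U z (f # map (sproj f g) xs @ g # map (sproj f g) ys)"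
    by (simp add: ws'_def)
  moreover have "flag_equiv (f # map (sproj f g) xs @ g # map (sproj f g) ys) (f # xs @ wj # ys)"
    using g xs' by (rule pair_reduction_flag_equiv)
  ultimately show ?thesis by (rule flag_adapted_flag_equiv)
qed

theorem admissible_flag_adapted: "admissible U z ws \<Longrightarrow> flag_adapted U z ws"
proof (induction ws arbitrary: U z rule: length_induct)
  case (1 ws)
  show ?case
  proof (cases ws)
    case Nil
    then show ?thesis by (simp add: flag_adapted_Nil)
  next
    case (Cons w1 rest)
    show ?thesis
    proof (cases "w1 \<in> vec.span {z}")
      case True
      then show ?thesis using 1 unfolding Cons by (intro flag_adapted_kernel_first) auto
    next
      case False
      then obtain xs wj ys where rest: "rest = xs @ wj # ys"
        and partner: "\<omega> w1 wj \<noteq> 0" "\<forall>x\<in>set xs. \<omega> w1 x = 0"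
        using first_partner 1(2) Cons by blast
      show ?thesis using 1 partner unfolding Cons rest by (intro flag_adapted_pair) auto
    qed
  qed
qed

theorem hyperbolic_basis_adapted_to_flag:
  assumes dimV: "vec.dim (UNIV :: (complex^'m) set) = Suc m"
    and U: "vec.subspace U" and nd: "nondegenerate U"
    and z0: "z0 \<noteq> 0" "\<forall>y. \<omega> z0 y = 0" and V: "vec.span (insert z0 U) = UNIV"
    and ws: "length ws = Suc m" "vec.span (set ws) = UNIV"
  obtains e vs where "is_basis (Suc m) e" "\<forall>k\<in>{1..m}. e k \<in> U"
    "vec.span {e (Suc m)} = {v. \<forall>w. \<omega> v w = 0}" "hyperbolic \<omega> (Suc m) e"
    "flag_equiv vs ws" "\<forall>v\<in>set vs. v = e (Suc m) \<or> (\<exists>k\<in>{1..m}. v = e k \<or> v = e k + e (Suc m))"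
proof -
  have "vec.dim (set ws) = length ws" using ws dimV vec.dim_span[of "set ws"] by simp
  then have "admissible U z0 ws" using U nd z0 V ws(2)
    by (simp add: admissible_def indep_list_iff_dim)
  then have "flag_adapted U z0 ws" by (rule admissible_flag_adapted)
  then obtain E vs \<kappa> where \<kappa>: "\<kappa> \<noteq> 0" and E: "E \<subseteq> U" "hyperbolic_set E"
    and ad: "adapted (\<kappa> *s z0) E vs" and eq: "flag_equiv vs ws"
    unfolding flag_adapted_def by blast
  define z where "z = \<kappa> *s z0"
  have z: "\<forall>y. \<omega> z y = 0" using z0 by (simp add: z_def)
  have "z \<notin> U" using \<kappa> z0 nd z by (auto simp: z_def nondegenerate_def)
  then have zE: "z \<notin> vec.span E" using vec.span_minimal[OF E(1) U] by blast
  have "vec.span (set vs) = UNIV" using flag_equiv_span[OF eq] ws(2) by simp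
  then obtain e where e: "is_basis (Suc m) e" "e ` {1..m} = E" "e (Suc m) = z"
    "hyperbolic \<omega> (Suc m) e"
    using enumerated_basis[OF dimV zE z E(2) ad[folded z_def]] by blast
  have "vec.span {z} = vec.span {z0}" using span_insert_triangular[of z \<kappa> z0 "{}"] \<kappa>
    by (simp add: z_def vec.span_zero)
  then have "vec.span {e (Suc m)} = {v. \<forall>w. \<omega> v w = 0}"
    using kernel_line[OF U nd z0(2) V] e(3) by simp
  moreover have "\<forall>v\<in>set vs. v = e (Suc m) \<or> (\<exists>k\<in>{1..m}. v = e k \<or> v = e k + e (Suc m))"
    using ad e(2,3) by (auto simp: adapted_def z_def)
  ultimately show ?thesis using that e E(1) eq by blast
qed

end

theorem lemma3:
  fixes n :: nat
    and U :: "(complex^'m) set"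
    and F :: "nat \<Rightarrow> (complex^'m) set"
    and \<omega> :: "complex^'m \<Rightarrow> complex^'m \<Rightarrow> complex"
  assumes "CARD('m) = 2*n + 1"
    and "vec.subspace U" and "vec.dim U = 2*n"
    and "full_flag (2*n+1) F"
    and "skew_bilinear \<omega>"
    and "\<forall>u\<in>U. (\<forall>w\<in>U. \<omega> u w = 0) \<longrightarrow> u = 0"
  shows "\<exists>e :: nat \<Rightarrow> complex^'m.
           is_basis (2*n+1) e \<and>
           (\<forall>k\<in>{1..2*n}. e k \<in> U) \<and>
           vec.span {e (2*n+1)} = {v. \<forall>w. \<omega> v w = 0} \<and>
           hyperbolic \<omega> (2*n+1) e \<and>
           (\<exists>v :: nat \<Rightarrow> complex^'m.
              (\<forall>i\<in>{1..2*n+1}. v i = e (2*n+1) \<or>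
                 (\<exists>k\<in>{1..2*n}. v i = e k \<or> v i = e k + e (2*n+1))) \<and>
              (\<forall>i\<in>{1..2*n+1}. F i = vec.span (v ` {1..i})))"
proof -
  interpret skew_form \<omega> using assms(5) by (rule skew_form.intro)
  have U: "vec.subspace U" and nd: "nondegenerate U"
    using assms(2,6) by (simp_all add: nondegenerate_def)
  have dimV: "vec.dim (UNIV :: (complex^'m) set) = Suc (2*n)"
    using assms(1) by (simp add: card_cart_basis)
  obtain z0 where z0: "z0 \<noteq> 0" "\<forall>y. \<omega> z0 y = 0" using kernel_exists assms(1) by auto
  then have "z0 \<notin> U" using nd by (auto simp: nondegenerate_def)
  then have V: "vec.span (insert z0 U) = UNIV"
    using span_insert_hyperplane[OF U] dimV assms(3) by simp
  obtain ws where ws: "length ws = 2*n+1" "\<forall>i\<in>{1..2*n+1}. F i = vec.span (set (take i ws))"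
    using full_flag_list[OF assms(4)] by blast
  then have "length ws = Suc (2*n)" "vec.span (set ws) = UNIV"
    using assms(4) by (simp_all add: full_flag_def)
  then obtain e vs where e: "is_basis (Suc (2*n)) e" "\<forall>k\<in>{1..2*n}. e k \<in> U"
    "vec.span {e (Suc (2*n))} = {v. \<forall>w. \<omega> v w = 0}" "hyperbolic \<omega> (Suc (2*n)) e"
    and eq: "flag_equiv vs ws" and forms: "\<forall>v\<in>set vs. v = e (Suc (2*n)) \<or>
      (\<exists>k\<in>{1..2*n}. v = e k \<or> v = e k + e (Suc (2*n)))"
    by (rule hyperbolic_basis_adapted_to_flag[OF dimV U nd z0 V])
  define v where "v i = vs ! (i - 1)" for i
  have len: "length vs = 2*n+1" using eq ws(1) by (simp add: flag_equiv_def)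
  then have "v ` {1..i} = set (take i vs)" if "i \<in> {1..2*n+1}" for i
    using that image_nth_pred[of i vs] by (simp add: v_def)
  then have "\<forall>i\<in>{1..2*n+1}. F i = vec.span (v ` {1..i})"
    using ws(2) eq len by (auto simp: flag_equiv_def)
  moreover have "\<forall>i\<in>{1..2*n+1}. v i \<in> set vs" using len by (auto simp: v_def intro!: nth_mem)
  ultimately show ?thesis using e forms by (intro exI[of _ e] conjI exI[of _ v]) auto
qed

end
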